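(* Let $f \colon \mathbb{R}^n \to \mathbb{R}$ and $g \colon \mathbb{R}^n \to \mathbb{R}^m$ be continuously differentiable, let $X \subseteq \mathbb{R}^m$ be nonempty and closed, let $\rho>0$, and let $p^\rho(y) = \sum_{i=1}^n p_i^\rho(y_i)$ where each $p_i^\rho$ satisfies (P.1)–(P.3) below. Let $(x^*,y^* )$ be a stationary point of (SPOref) in the sense defined below. Then there exists $\alpha^*>0$ such that $(x^*,y^* )$ is a stationary point of Pen$(\alpha)$ (in the sense defined below) for all $\alpha\ge\alpha^*$.
   Context: Conditions on each $p_i^\rho\colon\mathbb{R}\to\mathbb{R}$: (P.1) convex with a unique minimizer $s_i^\rho>0$; (P.2) $p_i^\rho(0)-p_i^\rho(s_i^\rho)=\rho$; (P.3) continuously differentiable. Notation: $I_0(z)=\{i : z_i=0\}$, $|x| = (|x_1|,\dots,|x_n|)^T$, $\circ$ the componentwise product, $e_i$ the $i$-th unit vector, $g'(x)$ the Jacobian of $g$, $N^{\lim}_X$ the limiting (Mordukhovich) normal cone to $X$ (the outer limit of Fréchet normal cones, where the Fréchet normal cone is the polar of the Bouligand tangent cone). (SPOref) is $\min_{x,y} f(x)+p^\rho(y)$ s.t. $g(x)\in X$, $x\circ y=0$, $y\ge0$. A feasible point $(x^*,y^* )$ of (SPOref) is stationary if there exist $\lambda^*\in N^{\lim}_X(g(x^* ))$, reals $\gamma_i^x$ ($i\in I_0(x^* )$), $\gamma_i^y$ and $\nu_i^*\ge 0$ ($i\in I_0(y^* )$) with $0 = \nabla f(x^* ) + g'(x^*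 )^T\lambda^* + \sum_{i\in I_0(x^* )} \gamma_i^x y_i^* e_i$ and $0 = \nabla p^\rho(y^* ) + \sum_{i\in I_0(y^* )}(\gamma_i^y x_i^* - \nu_i^* ) e_i$. Pen$(\alpha)$ is $\min_{x,y} f(x)+p^\rho(y)+\alpha|x|^Ty$ s.t. $g(x)\in X$, $y\ge 0$. A point $(x^*,y^* )$ is stationary for Pen$(\alpha)$ if $g(x^* )\in X$, $y^*\ge0$, and there exist $\lambda\in N^{\lim}_X(g(x^* ))$ and $\gamma_i\ge 0$ ($i\in I_0(y^* )$) such that $0\in \nabla f(x^* ) + \alpha\, y^*\circ\partial(|x^*|) + g'(x^* )^T\lambda$ and $0 = \nabla p^\rho(y^* ) + \alpha|x^*| - \sum_{i\in I_0(y^* )}\gamma_i e_i$, where $y^*\circ\partial(|x^*|) = \{y^*\circ s : s_i = \operatorname{sign}(x_i^* ) \text{ if } x_i^*\ne0,\ s_i\in[-1,1] \text{ if } x_i^*=0\}$. *)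

theory Defs
  imports "HOL-Analysis.Analysis"
begin

definition tangent_cone :: "('a::real_normed_vector) set \<Rightarrow> 'a \<Rightarrow> 'a set" where
  "tangent_cone X z = {d. \<exists>t zs. (\<forall>k. t k > 0 \<and> zs k \<in> X) \<and> t \<longlonglongrightarrow> 0 \<and>
        zs \<longlonglongrightarrow> z \<and> (\<lambda>k. (1 / t k) *\<^sub>R (zs k - z)) \<longlonglongrightarrow> d}"

definition frechet_normal_cone :: "('a::real_inner) set \<Rightarrow> 'a \<Rightarrow> 'a set" where
  "frechet_normal_cone X z = (if z \<in> X then {v. \<forall>d\<in>tangent_cone X z. inner v d \<le> 0} else {})"

definition limiting_normal_cone :: "('a::real_inner) set \<Rightarrow> 'a \<Rightarrow> 'a set" where
  "limiting_normal_cone X z = {v. \<exists>zs vs. (\<forall>k. zs k \<in> X \<and> vs k \<in> frechet_normal_cone X (zs k)) \<and>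
        zs \<longlonglongrightarrow> z \<and> vs \<longlonglongrightarrow> v}"

(* Stationarity for (SPOref); gradf = gradient of f, Jg = Jacobian of g,
   pd i = derivative of p_i^rho, so grad p^rho(y) = (pd i (y$i))_i. *)
definition SPOref_stationary ::
  "(real^'n \<Rightarrow> real^'n) \<Rightarrow> (real^'n \<Rightarrow> real^'n^'m) \<Rightarrow> (real^'n \<Rightarrow> real^'m) \<Rightarrow> (real^'m) set
   \<Rightarrow> ('n \<Rightarrow> real \<Rightarrow> real) \<Rightarrow> real^'n \<Rightarrow> real^'n \<Rightarrow> bool" where
  "SPOref_stationary gradf Jg g X pd x y \<longleftrightarrow>
     g x \<in> X \<and> (\<forall>i. x$i * y$i = 0) \<and> (\<forall>i. y$i \<ge> 0) \<and>
     (\<exists>lam \<in> limiting_normal_cone X (g x). \<exists>gx gy nu :: 'n \<Rightarrow> real.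
        (\<forall>i. y$i = 0 \<longrightarrow> nu i \<ge> 0) \<and>
        0 = gradf x + transpose (Jg x) *v lam + (\<chi> i. if x$i = 0 then gx i * y$i else 0) \<and>
        0 = (\<chi> i. pd i (y$i)) + (\<chi> i. if y$i = 0 then gy i * x$i - nu i else 0))"

definition Pen_stationary ::
  "(real^'n \<Rightarrow> real^'n) \<Rightarrow> (real^'n \<Rightarrow> real^'n^'m) \<Rightarrow> (real^'n \<Rightarrow> real^'m) \<Rightarrow> (real^'m) set
   \<Rightarrow> ('n \<Rightarrow> real \<Rightarrow> real) \<Rightarrow> real \<Rightarrow> real^'n \<Rightarrow> real^'n \<Rightarrow> bool" where
  "Pen_stationary gradf Jg g X pd \<alpha> x y \<longleftrightarrow>
     g x \<in> X \<and> (\<forall>i. y$i \<ge> 0) \<and>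
     (\<exists>lam \<in> limiting_normal_cone X (g x). \<exists>gam :: 'n \<Rightarrow> real.
        (\<forall>i. y$i = 0 \<longrightarrow> gam i \<ge> 0) \<and>
        (\<exists>s :: real^'n. (\<forall>i. x$i \<noteq> 0 \<longrightarrow> s$i = sgn (x$i)) \<and>
                        (\<forall>i. x$i = 0 \<longrightarrow> s$i \<in> {-1..1}) \<and>
           0 = gradf x + \<alpha> *\<^sub>R (\<chi> i. y$i * s$i) + transpose (Jg x) *v lam) \<and>
        0 = (\<chi> i. pd i (y$i)) + \<alpha> *\<^sub>R (\<chi> i. \<bar>x$i\<bar>) - (\<chi> i. if y$i = 0 then gam i else 0))"

end

theory Submission
  imports Defs
begin

text \<open>The multipliers of (SPOref) yield multipliers of Pen(\<alpha>) directly: the normal-cone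
  multiplier \<lambda> is kept, the free subgradient entries at \<open>x\<^sub>i = 0\<close> are \<open>\<gamma>\<^sub>i\<^sup>x / \<alpha>\<close>, and the
  sign multipliers of \<open>y \<ge> 0\<close> are \<open>p\<^sub>i'(y\<^sub>i) + \<alpha> \<bar>x\<^sub>i\<bar>\<close>. Complementarity \<open>x \<circ> y = 0\<close> makes both
  stationarity equations agree, and the sign multipliers are nonnegative as soon as \<alpha>
  dominates every \<open>\<bar>\<gamma>\<^sub>i\<^sup>x\<bar>\<close> and every \<open>\<bar>p\<^sub>i'(0)\<bar> / \<bar>x\<^sub>i\<bar>\<close> with \<open>x\<^sub>i \<noteq> 0\<close>.\<close>

lemma finite_family_bounded_pos:
  fixes c :: "'i::finite \<Rightarrow> real"
  obtains a where "a > 0" "\<And>i. c i \<le> a"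
proof
  show "max 1 (Max (range c)) > 0" by simp
  show "c i \<le> max 1 (Max (range c))" for i
    by (simp add: le_max_iff_disj)
qed

lemma Pen_stationary_of_SPOref_multipliers:
  fixes x y :: "real^'n" and lam :: "real^'m" and gx gy nu :: "'n \<Rightarrow> real"
  assumes feasible: "g x \<in> X" "\<forall>i. x$i * y$i = 0" "\<forall>i. y$i \<ge> 0"
    and lam: "lam \<in> limiting_normal_cone X (g x)"
    and nu: "\<forall>i. y$i = 0 \<longrightarrow> nu i \<ge> 0"
    and x_eq: "0 = gradf x + transpose (Jg x) *v lam + (\<chi> i. if x$i = 0 then gx i * y$i else 0)"
    and y_eq: "0 = (\<chi> i. pd i (y$i)) + (\<chi> i. if y$i = 0 then gy i * x$i - nu i else 0)"
    and \<alpha>_pos: "\<alpha> > 0"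
    and \<alpha>_gx: "\<forall>i. \<bar>gx i\<bar> \<le> \<alpha>"
    and \<alpha>_pd: "\<forall>i. x$i \<noteq> 0 \<longrightarrow> \<bar>pd i 0\<bar> \<le> \<alpha> * \<bar>x$i\<bar>"
  shows "Pen_stationary gradf Jg g X pd \<alpha> x y"
proof -
  have compl: "x$i = 0 \<or> y$i = 0" for i
    using feasible(2) by simp
  have y_eq_i: "0 = pd i (y$i) + (if y$i = 0 then gy i * x$i - nu i else 0)" for i
    using y_eq by (simp add: vec_eq_iff)
  define sg :: "real^'n" where "sg = (\<chi> i. if x$i = 0 then gx i / \<alpha> else sgn (x$i))"
  have sg_in: "sg$i \<in> {-1..1}" if "x$i = 0" for i
    using that \<alpha>_gx[rule_format, of i] \<alpha>_pos
    by (simp add: sg_def abs_le_iff divide_le_eq le_divide_eq)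
  have sg_term: "\<alpha> *\<^sub>R (\<chi> i. y$i * sg$i) = (\<chi> i. if x$i = 0 then gx i * y$i else 0)"
    using compl \<alpha>_pos by (auto simp: vec_eq_iff sg_def)
  define gam where "gam i = pd i (y$i) + \<alpha> * \<bar>x$i\<bar>" for i
  have gam_nonneg: "gam i \<ge> 0" if "y$i = 0" for i
  proof (cases "x$i = 0")
    case True
    then show ?thesis using y_eq_i[of i] nu that by (simp add: gam_def)
  next
    case False
    then show ?thesis using \<alpha>_pd[rule_format, of i] that by (simp add: gam_def abs_le_iff)
  qed
  have gam_eq: "0 = (\<chi> i. pd i (y$i)) + \<alpha> *\<^sub>R (\<chi> i. \<bar>x$i\<bar>) - (\<chi> i. if y$i = 0 then gam i else 0)"
  proof -
    have "gam i = 0" if "y$i \<noteq> 0" for i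
      using compl[of i] y_eq_i[of i] that by (simp add: gam_def)
    then show ?thesis by (auto simp: vec_eq_iff gam_def)
  qed
  show ?thesis
    unfolding Pen_stationary_def
  proof (intro conjI bexI[OF _ lam] exI[of _ gam] exI[of _ sg] allI impI)
    show "0 = gradf x + \<alpha> *\<^sub>R (\<chi> i. y$i * sg$i) + transpose (Jg x) *v lam"
      using x_eq unfolding sg_term by (simp add: algebra_simps)
  qed (use feasible sg_in gam_nonneg gam_eq in \<open>auto simp: sg_def\<close>)
qed

theorem mainTheorem3:
  fixes f :: "real^'n \<Rightarrow> real" and gradf :: "real^'n \<Rightarrow> real^'n"
    and g :: "real^'n \<Rightarrow> real^'m" and Jg :: "real^'n \<Rightarrow> real^'n^'m"
    and X :: "(real^'m) set" and \<rho> :: real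
    and p :: "'n \<Rightarrow> real \<Rightarrow> real" and pd :: "'n \<Rightarrow> real \<Rightarrow> real" and s :: "'n \<Rightarrow> real"
    and xs ys :: "real^'n"
  assumes f_C1: "\<forall>x. (f has_derivative (\<lambda>h. inner (gradf x) h)) (at x)" "continuous_on UNIV gradf"
    and g_C1: "\<forall>x. (g has_derivative (\<lambda>h. Jg x *v h)) (at x)" "continuous_on UNIV Jg"
    and X_ne: "X \<noteq> {}" and X_closed: "closed X"
    and rho_pos: "\<rho> > 0"
    and P1: "\<forall>i. convex_on UNIV (p i) \<and> s i > 0 \<and> (\<forall>t. t \<noteq> s i \<longrightarrow> p i (s i) < p i t)"
    and P2: "\<forall>i. p i 0 - p i (s i) = \<rho>"
    and P3: "\<forall>i. (\<forall>t. (p i has_real_derivative pd i t) (at t)) \<and> continuous_on UNIV (pd i)"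
    and stat: "SPOref_stationary gradf Jg g X pd xs ys"
  shows "\<exists>\<alpha>0 > 0. \<forall>\<alpha> \<ge> \<alpha>0. Pen_stationary gradf Jg g X pd \<alpha> xs ys"
proof -
  obtain lam gx gy nu where feasible: "g xs \<in> X" "\<forall>i. xs$i * ys$i = 0" "\<forall>i. ys$i \<ge> 0"
    and multipliers: "lam \<in> limiting_normal_cone X (g xs)" "\<forall>i. ys$i = 0 \<longrightarrow> nu i \<ge> 0"
      "0 = gradf xs + transpose (Jg xs) *v lam + (\<chi> i. if xs$i = 0 then gx i * ys$i else 0)"
      "0 = (\<chi> i. pd i (ys$i)) + (\<chi> i. if ys$i = 0 then gy i * xs$i - nu i else 0)"
    using stat unfolding SPOref_stationary_def by blast
  obtain \<alpha>0 where \<alpha>0_pos: "\<alpha>0 > 0"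
    and \<alpha>0_bound: "\<And>i. max \<bar>gx i\<bar> (\<bar>pd i 0\<bar> / \<bar>xs$i\<bar>) \<le> \<alpha>0"
    using finite_family_bounded_pos[of "\<lambda>i. max \<bar>gx i\<bar> (\<bar>pd i 0\<bar> / \<bar>xs$i\<bar>)"] by blast
  have "Pen_stationary gradf Jg g X pd \<alpha> xs ys" if "\<alpha> \<ge> \<alpha>0" for \<alpha>
  proof -
    have "\<bar>gx i\<bar> \<le> \<alpha> \<and> \<bar>pd i 0\<bar> / \<bar>xs$i\<bar> \<le> \<alpha>" for i
      using \<alpha>0_bound[of i] that by simp
    then have \<alpha>_bounds: "\<forall>i. \<bar>gx i\<bar> \<le> \<alpha>" "\<forall>i. xs$i \<noteq> 0 \<longrightarrow> \<bar>pd i 0\<bar> \<le> \<alpha> * \<bar>xs$i\<bar>"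
      by (auto simp: divide_le_eq mult.commute)
    have \<alpha>_pos: "\<alpha> > 0"
      using \<alpha>0_pos that by simp
    show ?thesis
      by (intro Pen_stationary_of_SPOref_multipliers[where lam = lam and gx = gx and gy = gy and nu = nu]
          feasible multipliers \<alpha>_pos \<alpha>_bounds)
  qed
  with \<alpha>0_pos show ?thesis by auto
qed

end
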